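(* For all integers $k,d\ge1$ with $k\le 2d$, we have $\theta^{\rm D}(k+1,d+1)\ge\theta^{\rm D}(k,d)$.
   Context: For integers $d\ge1$ and $1\le k\le 2d$, the directed $k$-neighbor graph ($k$-DnG) on $\mathbb{Z}^d$ is the random directed graph obtained by letting each vertex $x\in\mathbb{Z}^d$, independently of all other vertices, choose a uniformly random subset of exactly $k$ of its $2d$ nearest neighbors (in $\ell_1$-distance), and placing a directed edge from $x$ to each chosen neighbor. We write $\theta^{\rm D}(k,d)=\mathbb{P}(o\rightsquigarrow\infty \text{ in the $k$-DnG on }\mathbb{Z}^d)$, where $o$ is the origin and $o\rightsquigarrow\infty$ is the event that there is an infinite self-avoiding directed path along edges of the $k$-DnG starting at $o$. *)

theory Defs
  imports "HOL-Probability.Probability"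
begin

definition lattice :: "nat \<Rightarrow> int list set" where
  "lattice d = {x. length x = d}"

definition origin :: "nat \<Rightarrow> int list" where
  "origin d = replicate d 0"

text \<open>The 2d nearest-neighbour directions: (i, True) means +e_i, (i, False) means -e_i.\<close>
definition dirs :: "nat \<Rightarrow> (nat \<times> bool) set" where
  "dirs d = {..<d} \<times> UNIV"

definition step :: "int list \<Rightarrow> nat \<times> bool \<Rightarrow> int list" where
  "step x v = x[fst v := x ! fst v + (if snd v then 1 else -1)]"

definition choice_pmf :: "nat \<Rightarrow> nat \<Rightarrow> (nat \<times> bool) set pmf" where
  "choice_pmf k d = pmf_of_set {S. S \<subseteq> dirs d \<and> card S = k}"

definition DnG :: "nat \<Rightarrow> nat \<Rightarrow> (int list \<Rightarrow> (nat \<times> bool) set) measure" where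
  "DnG k d = (\<Pi>\<^sub>M x\<in>lattice d. measure_pmf (choice_pmf k d))"

definition reaches_infinity :: "nat \<Rightarrow> (int list \<Rightarrow> (nat \<times> bool) set) \<Rightarrow> bool" where
  "reaches_infinity d \<omega> \<longleftrightarrow>
     (\<exists>p :: nat \<Rightarrow> int list. p 0 = origin d \<and> inj p \<and>
        (\<forall>n. \<exists>v \<in> \<omega> (p n). p (Suc n) = step (p n) v))"

definition thetaD :: "nat \<Rightarrow> nat \<Rightarrow> real" where
  "thetaD k d = measure (DnG k d) {\<omega> \<in> space (DnG k d). reaches_infinity d \<omega>}"

end

(* Explore the k-DnG on Z^d and the (k+1)-DnG on Z^(d+1) together from the origin, revealing
   the random choice at one vertex at a time. Every reachable vertex y of Z^d is mirrored by a
   reachable vertex (y, L y) of Z^(d+1) above it. The (k+1)-set revealed at (y, L y) either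
   contains both vertical directions, and then (y, L y + 1) is reachable as well while y stays
   unrevealed, or it contains k horizontal directions. In the second case a uniformly chosen
   k-subset of the horizontal part is a uniform k-set, so the steps taken from y can be copied
   by its mirror. By induction on the number of unrevealed vertices of a finite l1-ball, the
   (k+1)-DnG on Z^(d+1) reaches l1-distance n at least as likely as the k-DnG on Z^d; letting n
   tend to infinity (continuity from above and Koenig's lemma) gives the claim. *)

theory Submission
  imports Defs "HOL-Library.Transitive_Closure_Table"
begin

definition l1_norm :: "int list \<Rightarrow> int" where
  "l1_norm x = sum_list (map abs x)"

definition l1_ball :: "nat \<Rightarrow> nat \<Rightarrow> int list set" where
  "l1_ball d n = {x. length x = d \<and> l1_norm x < int n}"

lemma length_step [simp]: "length (step x v) = length x"
  by (simp add: step_def)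

lemma step_beyond: "length x \<le> fst v \<Longrightarrow> step x v = x"
  by (simp add: step_def list_update_beyond)

lemma step_snoc: "fst v < length y \<Longrightarrow> step (y @ [h]) v = step y v @ [h]"
  by (simp add: step_def list_update_append1 nth_append)

lemma step_snoc_up: "step (y @ [h]) (length y, True) = y @ [h + 1]"
  by (simp add: step_def list_update_append)

lemma length_origin [simp]: "length (origin d) = d"
  by (simp add: origin_def)

lemma origin_Suc: "origin (Suc d) = origin d @ [0]"
  by (simp add: origin_def replicate_append_same[symmetric])

lemma l1_norm_origin [simp]: "l1_norm (origin d) = 0"
  by (simp add: l1_norm_def origin_def sum_list_replicate)

lemma l1_norm_snoc [simp]: "l1_norm (y @ [h]) = l1_norm y + \<bar>h\<bar>"
  by (simp add: l1_norm_def)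

lemma sum_list_update_ab_group:
  fixes xs :: "'a::ab_group_add list"
  shows "k < length xs \<Longrightarrow> sum_list (xs[k := a]) = sum_list xs + a - xs ! k"
  by (induction xs arbitrary: k) (auto split: nat.splits)

lemma l1_norm_step_le: "l1_norm (step x v) \<le> l1_norm x + 1"
proof (cases "fst v < length x")
  case True
  let ?a = "x ! fst v + (if snd v then 1 else -1)"
  have "l1_norm (step x v) = sum_list ((map abs x)[fst v := \<bar>?a\<bar>])"
    by (simp add: l1_norm_def step_def map_update)
  also have "\<dots> = l1_norm x + \<bar>?a\<bar> - \<bar>x ! fst v\<bar>"
    using True by (simp add: sum_list_update_ab_group l1_norm_def)
  also have "\<dots> \<le> l1_norm x + 1"
    by auto
  finally show ?thesis .
qed (simp add: step_beyond)

lemma finite_l1_ball: "finite (l1_ball d n)"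
proof (rule finite_subset)
  show "l1_ball d n \<subseteq> {xs. set xs \<subseteq> {- int n..int n} \<and> length xs = d}"
  proof
    fix x assume x: "x \<in> l1_ball d n"
    have "\<bar>a\<bar> \<le> l1_norm x" if "a \<in> set x" for a
      unfolding l1_norm_def using that by (intro member_le_sum_list) auto
    with x show "x \<in> {xs. set xs \<subseteq> {- int n..int n} \<and> length xs = d}"
      by (force simp: l1_ball_def)
  qed
qed (intro finite_lists_length_eq; simp)

lemma finite_dirs: "finite (dirs d)"
  by (simp add: dirs_def)

lemma card_dirs: "card (dirs d) = 2 * d"
  by (simp add: dirs_def card_cartesian_product)

lemma dirs_Suc: "dirs (Suc d) = insert (d, True) (insert (d, False) (dirs d))"
  by (auto simp: dirs_def less_Suc_eq)

lemma vertical_notin_dirs: "(d, b) \<notin> dirs d"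
  by (simp add: dirs_def)

section \<open>Exploration\<close>

definition explored_edges ::
    "int list set \<Rightarrow> (int list \<Rightarrow> (nat \<times> bool) set) \<Rightarrow> (int list \<times> int list) set" where
  "explored_edges K \<sigma> = {(x, step x v) | x v. x \<in> K \<and> v \<in> \<sigma> x}"

definition reachable :: "nat \<Rightarrow> int list set \<Rightarrow> (int list \<Rightarrow> (nat \<times> bool) set) \<Rightarrow> int list set" where
  "reachable d K \<sigma> = {x. (origin d, x) \<in> (explored_edges K \<sigma>)\<^sup>*}"

lemma explored_edges_UNIV_iff: "(x, y) \<in> explored_edges UNIV \<omega> \<longleftrightarrow> (\<exists>v \<in> \<omega> x. y = step x v)"
  unfolding explored_edges_def by blast

lemma origin_reachable [simp]: "origin d \<in> reachable d K \<sigma>"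
  by (simp add: reachable_def)

lemma reachable_step:
  assumes "x \<in> reachable d K \<sigma>" "x \<in> K" "v \<in> \<sigma> x"
  shows "step x v \<in> reachable d K \<sigma>"
proof -
  have "(x, step x v) \<in> explored_edges K \<sigma>"
    unfolding explored_edges_def using assms(2,3) by blast
  with assms(1) show ?thesis
    unfolding reachable_def by (auto intro: rtrancl_into_rtrancl)
qed

lemma reachable_induct [consumes 1, case_names origin step]:
  assumes "z \<in> reachable d K \<sigma>"
    and "P (origin d)"
    and "\<And>x v. x \<in> reachable d K \<sigma> \<Longrightarrow> P x \<Longrightarrow> x \<in> K \<Longrightarrow> v \<in> \<sigma> x \<Longrightarrow> P (step x v)"
  shows "P z"
proof -
  have "(origin d, z) \<in> (explored_edges K \<sigma>)\<^sup>*"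
    using assms(1) by (simp add: reachable_def)
  then show ?thesis
  proof (induction rule: rtrancl_induct)
    case (step y z)
    then obtain v where "z = step y v" "y \<in> K" "v \<in> \<sigma> y"
      by (auto simp: explored_edges_def)
    moreover have "y \<in> reachable d K \<sigma>"
      using step.hyps(1) by (simp add: reachable_def)
    ultimately show ?case
      using assms(3) step.IH by blast
  qed (fact assms(2))
qed

lemma reachable_subsetI:
  assumes "origin d \<in> S"
    and "\<And>x v. x \<in> S \<Longrightarrow> x \<in> reachable d K \<sigma> \<Longrightarrow> x \<in> K \<Longrightarrow> v \<in> \<sigma> x \<Longrightarrow> step x v \<in> S"
  shows "reachable d K \<sigma> \<subseteq> S"
  using assms by (auto elim: reachable_induct)

lemma length_reachable: "z \<in> reachable d K \<sigma> \<Longrightarrow> length z = d"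
  by (induction rule: reachable_induct) simp_all

lemma reachable_mono:
  "explored_edges K \<sigma> \<subseteq> explored_edges K' \<sigma>' \<Longrightarrow> reachable d K \<sigma> \<subseteq> reachable d K' \<sigma>'"
  unfolding reachable_def using rtrancl_mono by blast

lemma reachable_fun_upd_mono:
  assumes "x \<notin> K"
  shows "reachable d K \<sigma> \<subseteq> reachable d (insert x K) (\<sigma>(x := A))"
proof (intro reachable_mono subsetI)
  fix e assume "e \<in> explored_edges K \<sigma>"
  then obtain y v where "e = (y, step y v)" "y \<in> K" "v \<in> \<sigma> y"
    unfolding explored_edges_def by blast
  with assms show "e \<in> explored_edges (insert x K) (\<sigma>(x := A))"
    unfolding explored_edges_def by (intro CollectI exI[of _ y] exI[of _ v]) auto
qed

lemma reachable_cong: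
  assumes "\<And>x. x \<in> K \<Longrightarrow> \<sigma> x = \<sigma>' x"
  shows "reachable d K \<sigma> = reachable d K \<sigma>'"
proof -
  have "explored_edges K \<sigma> = explored_edges K \<sigma>'"
    unfolding explored_edges_def using assms by force
  then show ?thesis
    by (simp add: reachable_def)
qed

lemma reachable_inter_dirs: "reachable d K (\<lambda>z. \<sigma> z \<inter> dirs d) = reachable d K \<sigma>"
proof
  show "reachable d K (\<lambda>z. \<sigma> z \<inter> dirs d) \<subseteq> reachable d K \<sigma>"
    by (intro reachable_mono) (auto simp: explored_edges_def)
next
  show "reachable d K \<sigma> \<subseteq> reachable d K (\<lambda>z. \<sigma> z \<inter> dirs d)"
  proof (rule reachable_subsetI)
    fix x v
    assume x: "x \<in> reachable d K (\<lambda>z. \<sigma> z \<inter> dirs d)" "x \<in> K" "v \<in> \<sigma> x"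
    show "step x v \<in> reachable d K (\<lambda>z. \<sigma> z \<inter> dirs d)"
    proof (cases "v \<in> dirs d")
      case False
      then have "length x \<le> fst v"
        using length_reachable[OF x(1)] by (cases v) (auto simp: dirs_def)
      then show ?thesis
        using x by (simp add: step_beyond)
    qed (use x in \<open>auto intro: reachable_step\<close>)
  qed simp
qed

lemma reachable_insert_subset:
  assumes "K \<subseteq> reachable d K \<sigma>"
  shows "reachable d (insert y K) (\<sigma>(y := T)) \<subseteq> reachable d K \<sigma> \<union> step y ` T"
proof (rule reachable_subsetI)
  fix x v
  assume x: "x \<in> reachable d K \<sigma> \<union> step y ` T" "x \<in> insert y K" "v \<in> (\<sigma>(y := T)) x"
  show "step x v \<in> reachable d K \<sigma> \<union> step y ` T"
  proof (cases "x = y")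
    case False
    then have "x \<in> K" "v \<in> \<sigma> x"
      using x by auto
    then show ?thesis
      using assms by (auto intro: reachable_step)
  qed (use x in auto)
qed simp

lemma reachable_override_on: "reachable d K \<sigma> \<subseteq> reachable d UNIV (override_on \<omega> \<sigma> K)"
  by (intro reachable_mono) (fastforce simp: explored_edges_def)

lemma reachable_override_on_closed:
  assumes "reachable d K \<sigma> \<subseteq> K"
  shows "reachable d UNIV (override_on \<omega> \<sigma> K) = reachable d K \<sigma>"
proof
  show "reachable d UNIV (override_on \<omega> \<sigma> K) \<subseteq> reachable d K \<sigma>"
  proof (rule reachable_subsetI)
    fix x v assume x: "x \<in> reachable d K \<sigma>" "v \<in> override_on \<omega> \<sigma> K x"
    then have "x \<in> K"
      using assms by blast
    then show "step x v \<in> reachable d K \<sigma>"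
      using x by (intro reachable_step) auto
  qed simp
qed (fact reachable_override_on)

definition reaches_dist :: "nat \<Rightarrow> nat \<Rightarrow> (int list \<Rightarrow> (nat \<times> bool) set) \<Rightarrow> bool" where
  "reaches_dist d n \<omega> \<longleftrightarrow> (\<exists>z \<in> reachable d UNIV \<omega>. int n \<le> l1_norm z)"

lemma reaches_dist_iff_l1_ball:
  "reaches_dist d n \<omega> \<longleftrightarrow> (\<exists>z \<in> reachable d (l1_ball d n) \<omega>. int n \<le> l1_norm z)"
proof
  assume "\<exists>z \<in> reachable d (l1_ball d n) \<omega>. int n \<le> l1_norm z"
  moreover have "reachable d (l1_ball d n) \<omega> \<subseteq> reachable d UNIV \<omega>"
    by (intro reachable_mono) (auto simp: explored_edges_def)
  ultimately show "reaches_dist d n \<omega>"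
    by (auto simp: reaches_dist_def)
next
  assume reach: "reaches_dist d n \<omega>"
  show "\<exists>z \<in> reachable d (l1_ball d n) \<omega>. int n \<le> l1_norm z"
  proof (rule ccontr)
    assume far: "\<not> ?thesis"
    have "reachable d UNIV \<omega> \<subseteq> reachable d (l1_ball d n) \<omega>"
    proof (rule reachable_subsetI)
      fix x v assume x: "x \<in> reachable d (l1_ball d n) \<omega>" "v \<in> \<omega> x"
      then have "x \<in> l1_ball d n"
        using far length_reachable[OF x(1)] by (force simp: l1_ball_def)
      then show "step x v \<in> reachable d (l1_ball d n) \<omega>"
        using x by (intro reachable_step)
    qed simp
    then show False
      using reach far by (auto simp: reaches_dist_def)
  qed
qed

lemma reaches_dist_local:
  assumes "\<And>z. z \<in> l1_ball d n \<Longrightarrow> \<omega> z \<inter> dirs d = \<omega>' z \<inter> dirs d"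
  shows "reaches_dist d n \<omega> = reaches_dist d n \<omega>'"
proof -
  have "reachable d (l1_ball d n) \<omega> = reachable d (l1_ball d n) (\<lambda>z. \<omega> z \<inter> dirs d)"
    by (rule reachable_inter_dirs[symmetric])
  also have "\<dots> = reachable d (l1_ball d n) (\<lambda>z. \<omega>' z \<inter> dirs d)"
    using assms by (intro reachable_cong) auto
  also have "\<dots> = reachable d (l1_ball d n) \<omega>'"
    by (rule reachable_inter_dirs)
  finally show ?thesis
    by (simp add: reaches_dist_iff_l1_ball)
qed

section \<open>Koenig's lemma\<close>

lemma rtrancl_path_l1_norm_le:
  assumes "rtrancl_path (\<lambda>a b. (a, b) \<in> explored_edges UNIV \<omega>) x xs y"
  shows "l1_norm y \<le> l1_norm x + int (length xs)"
  using assms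
proof (induction rule: rtrancl_path.induct)
  case (step x y ys z)
  then obtain v where "y = step x v"
    by (auto simp: explored_edges_UNIV_iff)
  then show ?case
    using l1_norm_step_le[of x v] step.IH by simp
qed simp

lemma rtrancl_path_successively:
  "rtrancl_path r x xs y \<Longrightarrow> successively r (x # xs) \<and> last (x # xs) = y"
  by (induction rule: rtrancl_path.induct) (auto simp: successively_Cons)

lemma reaches_infinity_imp_reaches_dist:
  assumes "reaches_infinity d \<omega>"
  shows "reaches_dist d n \<omega>"
proof (rule ccontr)
  assume near: "\<not> reaches_dist d n \<omega>"
  obtain p where p: "p 0 = origin d" "inj p" "\<And>m. \<exists>v \<in> \<omega> (p m). p (Suc m) = step (p m) v"
    using assms unfolding reaches_infinity_def by blast
  have reach: "p m \<in> reachable d UNIV \<omega>" for m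
  proof (induction m)
    case (Suc m)
    then show ?case
      using p(3)[of m] reachable_step[of "p m" d UNIV \<omega>] by auto
  qed (simp add: p(1))
  have "p m \<in> l1_ball d n" for m
    using near reach[of m] length_reachable[OF reach[of m]]
    by (auto simp: reaches_dist_def l1_ball_def not_le)
  then have "range p \<subseteq> l1_ball d n"
    by blast
  then have "finite (range p)"
    using finite_l1_ball finite_subset by blast
  then have "finite (UNIV :: nat set)"
    using p(2) by (rule finite_imageD)
  then show False
    by simp
qed

definition self_avoiding :: "nat \<Rightarrow> (int list \<Rightarrow> (nat \<times> bool) set) \<Rightarrow> int list list \<Rightarrow> bool" where
  "self_avoiding d \<omega> ps \<longleftrightarrow> ps \<noteq> [] \<and> hd ps = origin d \<and> distinct ps \<and>
     successively (\<lambda>a b. (a, b) \<in> explored_edges UNIV \<omega>) ps"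

definition extendable :: "nat \<Rightarrow> (int list \<Rightarrow> (nat \<times> bool) set) \<Rightarrow> int list list \<Rightarrow> bool" where
  "extendable d \<omega> ps \<longleftrightarrow> (\<forall>m. \<exists>qs. self_avoiding d \<omega> (ps @ qs) \<and> m \<le> length qs)"

lemma extendable_imp_self_avoiding:
  assumes "extendable d \<omega> ps" "ps \<noteq> []"
  shows "self_avoiding d \<omega> ps"
proof -
  obtain qs where "self_avoiding d \<omega> (ps @ qs)"
    using assms(1) unfolding extendable_def by blast
  with assms(2) show ?thesis
    unfolding self_avoiding_def by (auto simp: successively_append_iff)
qed

lemma finite_range_step: "finite (range (step x))"
proof (rule finite_subset)
  show "range (step x) \<subseteq> insert x (step x ` ({..<length x} \<times> UNIV))"
  proof
    fix z assume "z \<in> range (step x)"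
    then obtain i b where z: "z = step x (i, b)"
      by auto
    show "z \<in> insert x (step x ` ({..<length x} \<times> UNIV))"
      by (cases "i < length x") (auto simp: z step_beyond)
  qed
qed simp

text \<open>Finitely many out-neighbours: the pigeonhole step of Koenig's lemma.\<close>
lemma extendable_snoc:
  assumes "extendable d \<omega> ps" "ps \<noteq> []"
  shows "\<exists>c. (last ps, c) \<in> explored_edges UNIV \<omega> \<and> extendable d \<omega> (ps @ [c])"
proof (rule ccontr)
  let ?E = "explored_edges UNIV \<omega>"
  assume "\<not> ?thesis"
  then have "\<exists>M. \<forall>c. (last ps, c) \<in> ?E \<longrightarrow>
      (\<forall>qs. self_avoiding d \<omega> (ps @ [c] @ qs) \<longrightarrow> length qs < M c)"
    unfolding extendable_def by (intro choice) (auto simp: not_le)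
  then obtain M where M: "\<And>c qs. (last ps, c) \<in> ?E \<Longrightarrow> self_avoiding d \<omega> (ps @ [c] @ qs) \<Longrightarrow> length qs < M c"
    by blast
  define M0 where "M0 = (\<Sum>c\<in>range (step (last ps)). M c)"
  obtain qs where qs: "self_avoiding d \<omega> (ps @ qs)" "Suc M0 \<le> length qs"
    using assms(1) unfolding extendable_def by blast
  then obtain c qs' where c: "qs = c # qs'"
    by (cases qs) auto
  have "(last ps, c) \<in> ?E"
    using qs(1) assms(2) unfolding c self_avoiding_def by (simp add: successively_append_iff)
  moreover have "M c \<le> M0"
    using calculation unfolding M0_def
    by (intro member_le_sum) (auto simp: finite_range_step explored_edges_UNIV_iff)
  ultimately show False
    using M[of c qs'] qs c by fastforce
qed

lemma reaches_dist_imp_extendable: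
  assumes "\<forall>n. reaches_dist d n \<omega>"
  shows "extendable d \<omega> [origin d]"
  unfolding extendable_def
proof
  fix m
  let ?r = "\<lambda>a b. (a, b) \<in> explored_edges UNIV \<omega>"
  obtain z where z: "z \<in> reachable d UNIV \<omega>" "int m \<le> l1_norm z"
    using assms by (auto simp: reaches_dist_def)
  then have "?r\<^sup>*\<^sup>* (origin d) z"
    by (simp add: reachable_def rtranclp_rtrancl_eq)
  then obtain xs where "rtrancl_path ?r (origin d) xs z"
    by (auto simp: rtranclp_eq_rtrancl_path)
  then obtain xs' where xs': "rtrancl_path ?r (origin d) xs' z" "distinct (origin d # xs')"
    by (rule rtrancl_path_distinct)
  have "m \<le> length xs'"
    using rtrancl_path_l1_norm_le[OF xs'(1)] z(2) by simp
  moreover have "self_avoiding d \<omega> ([origin d] @ xs')"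
    using xs'(2) rtrancl_path_successively[OF xs'(1)] by (simp add: self_avoiding_def)
  ultimately show "\<exists>qs. self_avoiding d \<omega> ([origin d] @ qs) \<and> m \<le> length qs"
    by blast
qed

lemma extendable_chain:
  assumes "extendable d \<omega> [origin d]"
  obtains f where "\<And>m. length (f m) = Suc m \<and> extendable d \<omega> (f m)"
    "\<And>m. \<exists>c. (last (f m), c) \<in> explored_edges UNIV \<omega> \<and> f (Suc m) = f m @ [c]"
proof -
  have "\<exists>f. \<forall>m. (length (f m) = Suc m \<and> extendable d \<omega> (f m)) \<and>
      (\<exists>c. (last (f m), c) \<in> explored_edges UNIV \<omega> \<and> f (Suc m) = f m @ [c])"
  proof (rule dependent_nat_choice)
    fix ps m assume ps: "length ps = Suc m \<and> extendable d \<omega> ps"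
    then have "ps \<noteq> []"
      by auto
    with ps obtain c where
      "(last ps, c) \<in> explored_edges UNIV \<omega>" "extendable d \<omega> (ps @ [c])"
      using extendable_snoc[of d \<omega> ps] by auto
    with ps show "\<exists>ps'. (length ps' = Suc (Suc m) \<and> extendable d \<omega> ps') \<and>
        (\<exists>c. (last ps, c) \<in> explored_edges UNIV \<omega> \<and> ps' = ps @ [c])"
      by (intro exI[of _ "ps @ [c]"]) auto
  qed (use assms in \<open>auto intro!: exI[of _ "[origin d]"]\<close>)
  with that show thesis
    by blast
qed

lemma reaches_dist_imp_reaches_infinity:
  assumes "\<forall>n. reaches_dist d n \<omega>"
  shows "reaches_infinity d \<omega>"
proof -
  obtain f where f: "\<And>m. length (f m) = Suc m \<and> extendable d \<omega> (f m)"
    "\<And>m. \<exists>c. (last (f m), c) \<in> explored_edges UNIV \<omega> \<and> f (Suc m) = f m @ [c]"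
    using extendable_chain[OF reaches_dist_imp_extendable[OF assms]] by blast
  define p where "p m = last (f m)" for m
  have prefix: "f m = map p [0..<Suc m]" for m
  proof (induction m)
    case 0
    then show ?case
      using f(1)[of 0] by (cases "f 0") (auto simp: p_def)
  next
    case (Suc m)
    then show ?case
      using f(2)[of m] by (auto simp: p_def)
  qed
  have sa: "self_avoiding d \<omega> (map p [0..<Suc m])" for m
    unfolding prefix[symmetric] using f(1)[of m] by (auto intro: extendable_imp_self_avoiding)
  have "p 0 = origin d"
    using sa[of 0] by (simp add: self_avoiding_def)
  moreover have "inj p"
  proof (rule injI)
    fix i j assume "p i = p j"
    moreover have "inj_on p {0..<Suc (max i j)}"
      using sa[of "max i j"] by (simp add: self_avoiding_def distinct_map del: upt_Suc)
    ultimately show "i = j"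
      by (auto dest: inj_onD)
  qed
  moreover have "\<exists>v \<in> \<omega> (p m). p (Suc m) = step (p m) v" for m
    using f(2)[of m] by (auto simp: p_def explored_edges_UNIV_iff)
  ultimately show ?thesis
    unfolding reaches_infinity_def by blast
qed

lemma reaches_infinity_iff_reaches_dist: "reaches_infinity d \<omega> \<longleftrightarrow> (\<forall>n. reaches_dist d n \<omega>)"
  using reaches_infinity_imp_reaches_dist reaches_dist_imp_reaches_infinity by blast

section \<open>Events depending on finitely many coordinates\<close>

definition cylinder :: "'i set \<Rightarrow> 'b set \<Rightarrow> ('i \<Rightarrow> 'b set) \<Rightarrow> ('i \<Rightarrow> 'b set) set" where
  "cylinder B D \<tau> = {\<omega>. \<forall>z\<in>B. \<omega> z \<inter> D = \<tau> z}"

lemma disjoint_family_on_cylinder: "disjoint_family_on (cylinder B D) (B \<rightarrow>\<^sub>E Pow D)"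
  unfolding disjoint_family_on_def
proof (intro ballI impI)
  fix \<tau> \<tau>' assume "\<tau> \<in> B \<rightarrow>\<^sub>E Pow D" "\<tau>' \<in> B \<rightarrow>\<^sub>E Pow D" "\<tau> \<noteq> \<tau>'"
  then obtain z where "z \<in> B" "\<tau> z \<noteq> \<tau>' z"
    by (metis PiE_ext)
  then show "cylinder B D \<tau> \<inter> cylinder B D \<tau>' = {}"
    by (auto simp: cylinder_def)
qed

lemma local_event_eq_UN_cylinder:
  assumes local: "\<And>\<omega> \<omega>'. (\<And>z. z \<in> B \<Longrightarrow> \<omega> z \<inter> D = \<omega>' z \<inter> D) \<Longrightarrow> g \<omega> = g \<omega>'"
  shows "{\<omega>. g \<omega>} = (\<Union>\<tau> \<in> {\<tau> \<in> B \<rightarrow>\<^sub>E Pow D. g \<tau>}. cylinder B D \<tau>)"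
proof (intro set_eqI iffI)
  fix \<omega> assume "\<omega> \<in> {\<omega>. g \<omega>}"
  moreover define \<tau> where "\<tau> = restrict (\<lambda>z. \<omega> z \<inter> D) B"
  ultimately have "\<tau> \<in> {\<tau> \<in> B \<rightarrow>\<^sub>E Pow D. g \<tau>}" "\<omega> \<in> cylinder B D \<tau>"
    using local[of \<tau> \<omega>] by (auto simp: \<tau>_def cylinder_def)
  then show "\<omega> \<in> (\<Union>\<tau> \<in> {\<tau> \<in> B \<rightarrow>\<^sub>E Pow D. g \<tau>}. cylinder B D \<tau>)"
    by blast
next
  fix \<omega> assume "\<omega> \<in> (\<Union>\<tau> \<in> {\<tau> \<in> B \<rightarrow>\<^sub>E Pow D. g \<tau>}. cylinder B D \<tau>)"
  then obtain \<tau> where \<tau>: "\<tau> \<in> B \<rightarrow>\<^sub>E Pow D" "g \<tau>" "\<omega> \<in> cylinder B D \<tau>"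
    by blast
  have "g \<omega> = g \<tau>"
    by (rule local) (use \<tau> in \<open>auto simp: cylinder_def\<close>)
  with \<tau> show "\<omega> \<in> {\<omega>. g \<omega>}"
    by simp
qed

lemma
  fixes q :: "'b set pmf"
  assumes "finite B" "B \<subseteq> I"
  shows sets_PiM_cylinder:
      "space (PiM I (\<lambda>_. measure_pmf q)) \<inter> cylinder B D \<tau> \<in> sets (PiM I (\<lambda>_. measure_pmf q))"
    and measure_PiM_cylinder:
      "measure (PiM I (\<lambda>_. measure_pmf q)) (space (PiM I (\<lambda>_. measure_pmf q)) \<inter> cylinder B D \<tau>)
         = measure_pmf.prob (Pi_pmf B dflt (\<lambda>_. q)) (cylinder B D \<tau>)"
proof -
  interpret product_prob_space "\<lambda>_. measure_pmf q" I
    by unfold_locales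
  have emb: "space (PiM I (\<lambda>_. measure_pmf q)) \<inter> cylinder B D \<tau>
      = prod_emb I (\<lambda>_. measure_pmf q) B (PiE B (\<lambda>z. {A. A \<inter> D = \<tau> z}))"
    by (rule set_eqI) (simp add: prod_emb_iff space_PiM PiE_iff cylinder_def)
  show "space (PiM I (\<lambda>_. measure_pmf q)) \<inter> cylinder B D \<tau> \<in> sets (PiM I (\<lambda>_. measure_pmf q))"
    unfolding emb using assms by (intro sets_PiM_I) auto
  have "cylinder B D \<tau> = Pi B (\<lambda>z. {A. A \<inter> D = \<tau> z})"
    by (auto simp: cylinder_def)
  then show "measure (PiM I (\<lambda>_. measure_pmf q)) (space (PiM I (\<lambda>_. measure_pmf q)) \<inter> cylinder B D \<tau>)
      = measure_pmf.prob (Pi_pmf B dflt (\<lambda>_. q)) (cylinder B D \<tau>)"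
    unfolding emb using assms by (simp add: measure_PiM_emb measure_Pi_pmf_Pi)
qed

lemma
  fixes q :: "'b set pmf"
  assumes "finite B" "B \<subseteq> I" "finite D"
    and local: "\<And>\<omega> \<omega>'. (\<And>z. z \<in> B \<Longrightarrow> \<omega> z \<inter> D = \<omega>' z \<inter> D) \<Longrightarrow> g \<omega> = g \<omega>'"
  shows sets_PiM_local_event:
      "{\<omega> \<in> space (PiM I (\<lambda>_. measure_pmf q)). g \<omega>} \<in> sets (PiM I (\<lambda>_. measure_pmf q))"
    and measure_PiM_local_event:
      "measure (PiM I (\<lambda>_. measure_pmf q)) {\<omega> \<in> space (PiM I (\<lambda>_. measure_pmf q)). g \<omega>}
         = measure_pmf.prob (Pi_pmf B dflt (\<lambda>_. q)) {\<omega>. g \<omega>}"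
proof -
  let ?P = "PiM I (\<lambda>_. measure_pmf q)"
  let ?X = "{\<tau> \<in> B \<rightarrow>\<^sub>E Pow D. g \<tau>}"
  interpret product_prob_space "\<lambda>_. measure_pmf q" I
    by unfold_locales
  have "finite (B \<rightarrow>\<^sub>E Pow D)"
    using assms by (simp add: finite_PiE)
  then have fin: "finite ?X"
    by (rule finite_subset[rotated]) blast
  have disj: "disjoint_family_on (cylinder B D) ?X"
    by (rule disjoint_family_on_mono[OF _ disjoint_family_on_cylinder]) auto
  have event_UN: "{\<omega>. g \<omega>} = (\<Union>\<tau>\<in>?X. cylinder B D \<tau>)"
    by (rule local_event_eq_UN_cylinder) (rule local)
  have "{\<omega> \<in> space ?P. g \<omega>} = space ?P \<inter> {\<omega>. g \<omega>}"
    by blast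
  also have "\<dots> = (\<Union>\<tau>\<in>?X. space ?P \<inter> cylinder B D \<tau>)"
    unfolding event_UN by (rule Int_UN_distrib)
  finally have event: "{\<omega> \<in> space ?P. g \<omega>} = (\<Union>\<tau>\<in>?X. space ?P \<inter> cylinder B D \<tau>)" .
  show "{\<omega> \<in> space ?P. g \<omega>} \<in> sets ?P"
    unfolding event by (rule sets.finite_UN[OF fin sets_PiM_cylinder[OF assms(1,2)]])
  have "disjoint_family_on (\<lambda>\<tau>. space ?P \<inter> cylinder B D \<tau>) ?X"
    using disj by (rule disjoint_family_on_bisimulation) blast
  then have "measure ?P {\<omega> \<in> space ?P. g \<omega>} = (\<Sum>\<tau>\<in>?X. measure ?P (space ?P \<inter> cylinder B D \<tau>))"
    unfolding event using sets_PiM_cylinder[OF assms(1,2)]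
    by (intro finite_measure_finite_Union fin) auto
  also have "\<dots> = (\<Sum>\<tau>\<in>?X. measure_pmf.prob (Pi_pmf B dflt (\<lambda>_. q)) (cylinder B D \<tau>))"
    by (rule sum.cong[OF refl measure_PiM_cylinder[OF assms(1,2)]])
  also have "\<dots> = measure_pmf.prob (Pi_pmf B dflt (\<lambda>_. q)) (\<Union>\<tau>\<in>?X. cylinder B D \<tau>)"
    by (rule measure_pmf.finite_measure_finite_Union[OF fin _ disj, symmetric]) simp
  also have "\<dots> = measure_pmf.prob (Pi_pmf B dflt (\<lambda>_. q)) {\<omega>. g \<omega>}"
    unfolding event_UN ..
  finally show "measure ?P {\<omega> \<in> space ?P. g \<omega>} = measure_pmf.prob (Pi_pmf B dflt (\<lambda>_. q)) {\<omega>. g \<omega>}" .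
qed

lemma l1_ball_subset_lattice: "l1_ball d n \<subseteq> lattice d"
  by (auto simp: l1_ball_def lattice_def)

lemma measure_DnG_reaches_dist:
  "measure (DnG k d) {\<omega> \<in> space (DnG k d). reaches_dist d n \<omega>}
     = measure_pmf.prob (Pi_pmf (l1_ball d n) {} (\<lambda>_. choice_pmf k d)) {\<omega>. reaches_dist d n \<omega>}"
  unfolding DnG_def
  by (rule measure_PiM_local_event[OF finite_l1_ball l1_ball_subset_lattice finite_dirs])
    (rule reaches_dist_local)

lemma reaches_dist_antimono: "m \<le> n \<Longrightarrow> reaches_dist d n \<omega> \<Longrightarrow> reaches_dist d m \<omega>"
  unfolding reaches_dist_def by (meson of_nat_le_iff order_trans)

lemma reaches_dist_tendsto_thetaD:
  "(\<lambda>n. measure (DnG k d) {\<omega> \<in> space (DnG k d). reaches_dist d n \<omega>}) \<longlonglongrightarrow> thetaD k d"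
proof -
  interpret product_prob_space "\<lambda>_. measure_pmf (choice_pmf k d)" "lattice d"
    by unfold_locales
  define A where "A n = {\<omega> \<in> space (DnG k d). reaches_dist d n \<omega>}" for n
  have "A n \<in> sets (DnG k d)" for n
    unfolding A_def DnG_def
    by (rule sets_PiM_local_event[OF finite_l1_ball l1_ball_subset_lattice finite_dirs])
      (rule reaches_dist_local)
  moreover have "decseq A"
    unfolding decseq_def A_def by (auto intro: reaches_dist_antimono)
  ultimately have "(\<lambda>n. measure (DnG k d) (A n)) \<longlonglongrightarrow> measure (DnG k d) (\<Inter>n. A n)"
    unfolding DnG_def by (intro finite_Lim_measure_decseq) auto
  moreover have "(\<Inter>n. A n) = {\<omega> \<in> space (DnG k d). reaches_infinity d \<omega>}"
    unfolding A_def using reaches_infinity_iff_reaches_dist by auto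
  ultimately show ?thesis
    unfolding A_def thetaD_def by simp
qed

section \<open>Revealing coordinates one at a time\<close>

lemma prob_pair_pmf_of_set:
  assumes "A \<noteq> {}" "finite A"
  shows "measure_pmf.prob (pair_pmf (pmf_of_set A) r) E
     = (\<Sum>a\<in>A. measure_pmf.prob r {g. (a, g) \<in> E}) / real (card A)"
proof -
  have "ennreal (measure_pmf.prob (pair_pmf (pmf_of_set A) r) E)
      = emeasure (measure_pmf (pair_pmf (pmf_of_set A) r)) E"
    by (simp add: measure_pmf.emeasure_eq_measure)
  also have "\<dots> = (\<integral>\<^sup>+a. emeasure (measure_pmf (map_pmf (Pair a) r)) E \<partial>measure_pmf (pmf_of_set A))"
    by (simp add: pair_pmf_def map_pmf_def)
  also have "\<dots> = (\<Sum>a\<in>A. emeasure (measure_pmf (map_pmf (Pair a) r)) E) / of_nat (card A)"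
    using assms by (rule nn_integral_pmf_of_set)
  also have "\<dots> = (\<Sum>a\<in>A. ennreal (measure_pmf.prob r {g. (a, g) \<in> E})) / of_nat (card A)"
    by (intro arg_cong2[where f = "(/)"] sum.cong refl)
      (simp add: measure_pmf.emeasure_eq_measure vimage_def)
  also have "\<dots> = ennreal ((\<Sum>a\<in>A. measure_pmf.prob r {g. (a, g) \<in> E}) / real (card A))"
    using assms by (simp add: sum_ennreal ennreal_of_nat_eq_real_of_nat)
      (rule divide_ennreal, auto intro: sum_nonneg simp: card_gt_0_iff)
  finally show ?thesis
    by (subst (asm) ennreal_inj) (auto intro!: divide_nonneg_nonneg sum_nonneg)
qed

definition cond_prob ::
    "'i set \<Rightarrow> 'a pmf \<Rightarrow> 'a \<Rightarrow> (('i \<Rightarrow> 'a) \<Rightarrow> bool) \<Rightarrow> 'i set \<Rightarrow> ('i \<Rightarrow> 'a) \<Rightarrow> real" where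
  "cond_prob J q dflt f K \<sigma> =
     measure_pmf.prob (Pi_pmf (J - K) dflt (\<lambda>_. q)) {\<omega>. f (override_on \<omega> \<sigma> K)}"

lemma cond_prob_empty: "cond_prob J q dflt f {} \<sigma> = measure_pmf.prob (Pi_pmf J dflt (\<lambda>_. q)) {\<omega>. f \<omega>}"
  by (simp add: cond_prob_def)

lemma cond_prob_nonneg: "0 \<le> cond_prob J q dflt f K \<sigma>"
  by (simp add: cond_prob_def)

lemma cond_prob_le_1: "cond_prob J q dflt f K \<sigma> \<le> 1"
  by (simp add: cond_prob_def)

lemma cond_prob_eq_1: "(\<And>\<omega>. f (override_on \<omega> \<sigma> K)) \<Longrightarrow> cond_prob J q dflt f K \<sigma> = 1"
  by (simp add: cond_prob_def measure_pmf.prob_space)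

lemma cond_prob_eq_0: "(\<And>\<omega>. \<not> f (override_on \<omega> \<sigma> K)) \<Longrightarrow> cond_prob J q dflt f K \<sigma> = 0"
  by (simp add: cond_prob_def)

lemma cond_prob_insert:
  assumes "finite J" "i \<in> J" "i \<notin> K" "A \<noteq> {}" "finite A"
  shows "cond_prob J (pmf_of_set A) dflt f K \<sigma>
       = (\<Sum>a\<in>A. cond_prob J (pmf_of_set A) dflt f (insert i K) (\<sigma>(i := a))) / real (card A)"
proof -
  let ?q = "pmf_of_set A"
  let ?\<Pi> = "Pi_pmf (J - insert i K) dflt (\<lambda>_. ?q)"
  have J: "J - K = insert i (J - insert i K)"
    using assms by auto
  have override: "override_on (g(i := a)) \<sigma> K = override_on g (\<sigma>(i := a)) (insert i K)" for g a
    using assms(3) by (auto simp: override_on_def fun_eq_iff)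
  have "cond_prob J ?q dflt f K \<sigma> = measure_pmf.prob
      (map_pmf (\<lambda>(a, g). g(i := a)) (pair_pmf ?q ?\<Pi>)) {\<omega>. f (override_on \<omega> \<sigma> K)}"
    unfolding cond_prob_def J using assms(1) by (subst Pi_pmf_insert) auto
  also have "\<dots> = (\<Sum>a\<in>A. measure_pmf.prob ?\<Pi> {g. f (override_on (g(i := a)) \<sigma> K)}) / real (card A)"
    by (simp add: prob_pair_pmf_of_set[OF assms(4,5)])
  also have "\<dots> = (\<Sum>a\<in>A. cond_prob J ?q dflt f (insert i K) (\<sigma>(i := a))) / real (card A)"
    by (simp add: cond_prob_def override)
  finally show ?thesis .
qed

section \<open>Averaging over direction sets\<close>

definition dir_subsets :: "nat \<Rightarrow> nat \<Rightarrow> (nat \<times> bool) set set" where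
  "dir_subsets k d = {T. T \<subseteq> dirs d \<and> card T = k}"

definition both_vertical :: "nat \<Rightarrow> (nat \<times> bool) set \<Rightarrow> bool" where
  "both_vertical d S \<longleftrightarrow> (d, True) \<in> S \<and> (d, False) \<in> S"

definition n_dir_subsets :: "nat \<Rightarrow> nat \<Rightarrow> (nat \<times> bool) set \<Rightarrow> real" where
  "n_dir_subsets k d S = real (card {T \<in> dir_subsets k d. T \<subseteq> S})"

lemma choice_pmf_eq_pmf_of_set: "choice_pmf k d = pmf_of_set (dir_subsets k d)"
  by (simp add: choice_pmf_def dir_subsets_def)

lemma finite_dir_subsets: "finite (dir_subsets k d)"
  by (rule finite_subset[of _ "Pow (dirs d)"]) (auto simp: dir_subsets_def finite_dirs)

lemma finite_mem_dir_subsets: "S \<in> dir_subsets k d \<Longrightarrow> finite S"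
  using finite_dirs finite_subset by (auto simp: dir_subsets_def)

lemma dir_subsets_nonempty: "k \<le> 2 * d \<Longrightarrow> dir_subsets k d \<noteq> {}"
  using obtain_subset_with_card_n[of k "dirs d"] by (auto simp: card_dirs dir_subsets_def)

lemma not_both_vertical_imp_dir_subset:
  assumes S: "S \<in> dir_subsets (Suc k) (Suc d)" "\<not> both_vertical d S"
  shows "\<exists>T \<in> dir_subsets k d. T \<subseteq> S"
proof -
  obtain b where "S - dirs d \<subseteq> {(d, b)}"
    using S by (auto simp: dir_subsets_def dirs_Suc both_vertical_def)
  then have "card (S - dirs d) \<le> 1"
    using card_mono[of "{(d, b)}" "S - dirs d"] by simp
  moreover have "card S = card (S \<inter> dirs d) + card (S - dirs d)"
    using finite_mem_dir_subsets[OF S(1)] by (rule card_Int_Diff)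
  ultimately have "k \<le> card (S \<inter> dirs d)"
    using S(1) by (simp add: dir_subsets_def)
  then obtain T where "T \<subseteq> S \<inter> dirs d" "card T = k"
    by (rule obtain_subset_with_card_n)
  then show ?thesis
    by (auto simp: dir_subsets_def)
qed

lemma good_supersets_eq_image:
  assumes T: "T \<in> dir_subsets k d"
  shows "{S \<in> dir_subsets (Suc k) (Suc d). \<not> both_vertical d S \<and> T \<subseteq> S}
       = (\<lambda>z. insert z T) ` (dirs (Suc d) - T)"
proof (intro set_eqI iffI)
  fix S assume S: "S \<in> {S \<in> dir_subsets (Suc k) (Suc d). \<not> both_vertical d S \<and> T \<subseteq> S}"
  then have "card (S - T) = 1"
    using T finite_mem_dir_subsets[OF T] by (simp add: card_Diff_subset dir_subsets_def)
  then obtain z where z: "S - T = {z}"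
    by (auto simp: card_Suc_eq)
  then have "S = insert z T" "z \<in> dirs (Suc d) - T"
    using S by (auto simp: dir_subsets_def)
  then show "S \<in> (\<lambda>z. insert z T) ` (dirs (Suc d) - T)"
    by blast
next
  fix S assume "S \<in> (\<lambda>z. insert z T) ` (dirs (Suc d) - T)"
  then obtain z where z: "z \<in> dirs (Suc d) - T" "S = insert z T"
    by blast
  moreover have "(d, b) \<notin> T" for b
    using T vertical_notin_dirs by (auto simp: dir_subsets_def)
  ultimately show "S \<in> {S \<in> dir_subsets (Suc k) (Suc d). \<not> both_vertical d S \<and> T \<subseteq> S}"
    using T finite_mem_dir_subsets[OF T]
    by (auto simp: dir_subsets_def both_vertical_def dirs_Suc)
qed

lemma n_dir_subsets_insert_horizontal:
  assumes "T \<in> dir_subsets k d" "z \<in> dirs d - T"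
  shows "n_dir_subsets k d (insert z T) = real (Suc k)"
proof -
  have "{T' \<in> dir_subsets k d. T' \<subseteq> insert z T} = {T'. T' \<subseteq> insert z T \<and> card T' = k}"
    using assms by (auto simp: dir_subsets_def)
  then show ?thesis
    using assms finite_mem_dir_subsets[OF assms(1)]
    by (simp add: n_dir_subsets_def n_subsets dir_subsets_def)
qed

lemma n_dir_subsets_insert_vertical:
  assumes T: "T \<in> dir_subsets k d"
  shows "n_dir_subsets k d (insert (d, b) T) = 1"
proof -
  have "{T' \<in> dir_subsets k d. T' \<subseteq> insert (d, b) T} = {T}"
  proof (intro set_eqI iffI)
    fix T' assume "T' \<in> {T' \<in> dir_subsets k d. T' \<subseteq> insert (d, b) T}"
    then have "T' \<subseteq> T" "card T' = card T"
      using T vertical_notin_dirs[of d b] by (auto simp: dir_subsets_def)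
    then show "T' \<in> {T}"
      using finite_mem_dir_subsets[OF T] card_subset_eq by blast
  qed (use T in auto)
  then show ?thesis
    by (simp add: n_dir_subsets_def)
qed

text \<open>The sum does not depend on T: choosing a uniform good (k+1)-set S and then a uniform
  k-subset of its horizontal part yields a uniform k-set of horizontal directions.\<close>
lemma sum_good_supersets_inverse_n_dir_subsets:
  assumes T: "T \<in> dir_subsets k d"
  shows "(\<Sum>S \<in> {S \<in> dir_subsets (Suc k) (Suc d). \<not> both_vertical d S \<and> T \<subseteq> S}. 1 / n_dir_subsets k d S)
       = 2 + real (2 * d - k) / real (Suc k)"
proof -
  have inj: "inj_on (\<lambda>z. insert z T) (dirs (Suc d) - T)"
    by (rule inj_onI) blast
  have split: "dirs (Suc d) - T = (dirs d - T) \<union> {(d, True), (d, False)}"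
    using T vertical_notin_dirs by (auto simp: dirs_Suc dir_subsets_def)
  have "(\<Sum>S \<in> {S \<in> dir_subsets (Suc k) (Suc d). \<not> both_vertical d S \<and> T \<subseteq> S}. 1 / n_dir_subsets k d S)
      = (\<Sum>z \<in> dirs (Suc d) - T. 1 / n_dir_subsets k d (insert z T))"
    unfolding good_supersets_eq_image[OF T] using inj by (simp add: sum.reindex)
  also have "\<dots> = (\<Sum>z \<in> dirs d - T. 1 / n_dir_subsets k d (insert z T))
      + (\<Sum>z \<in> {(d, True), (d, False)}. 1 / n_dir_subsets k d (insert z T))"
    unfolding split using finite_dirs vertical_notin_dirs by (intro sum.union_disjoint) auto
  also have "(\<Sum>z \<in> dirs d - T. 1 / n_dir_subsets k d (insert z T)) = real (2 * d - k) / real (Suc k)"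
    using T finite_mem_dir_subsets[OF T]
    by (simp add: n_dir_subsets_insert_horizontal card_Diff_subset card_dirs dir_subsets_def)
  also have "(\<Sum>z \<in> {(d, True), (d, False)}. 1 / n_dir_subsets k d (insert z T)) = 2"
    using T by (simp add: n_dir_subsets_insert_vertical)
  finally show ?thesis
    by simp
qed

lemma sum_good_average_over_dir_subsets:
  "(\<Sum>S \<in> {S \<in> dir_subsets (Suc k) (Suc d). \<not> both_vertical d S}.
      (\<Sum>T \<in> {T \<in> dir_subsets k d. T \<subseteq> S}. f T) / n_dir_subsets k d S)
   = (2 + real (2 * d - k) / real (Suc k)) * sum f (dir_subsets k d)"
proof -
  let ?G = "{S \<in> dir_subsets (Suc k) (Suc d). \<not> both_vertical d S}"
  have "(\<Sum>S\<in>?G. (\<Sum>T \<in> {T \<in> dir_subsets k d. T \<subseteq> S}. f T) / n_dir_subsets k d S)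
      = (\<Sum>S\<in>?G. \<Sum>T \<in> {T \<in> dir_subsets k d. T \<subseteq> S}. f T / n_dir_subsets k d S)"
    by (simp add: sum_divide_distrib)
  also have "\<dots> = (\<Sum>T\<in>dir_subsets k d. \<Sum>S | S \<in> ?G \<and> T \<subseteq> S. f T / n_dir_subsets k d S)"
    using sum.swap_restrict[of ?G "dir_subsets k d" "\<lambda>S T. f T / n_dir_subsets k d S" "\<lambda>S T. T \<subseteq> S"]
    by (simp add: finite_dir_subsets)
  also have "\<dots> = (\<Sum>T\<in>dir_subsets k d. f T * (\<Sum>S \<in> {S \<in> dir_subsets (Suc k) (Suc d).
      \<not> both_vertical d S \<and> T \<subseteq> S}. 1 / n_dir_subsets k d S))"
    by (intro sum.cong refl) (auto simp: sum_distrib_left intro!: sum.cong)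
  also have "\<dots> = (\<Sum>T\<in>dir_subsets k d. f T * (2 + real (2 * d - k) / real (Suc k)))"
    by (simp add: sum_good_supersets_inverse_n_dir_subsets)
  finally show ?thesis
    by (simp add: sum_distrib_right mult.commute)
qed

lemma n_dir_subsets_pos:
  "S \<in> dir_subsets (Suc k) (Suc d) \<Longrightarrow> \<not> both_vertical d S \<Longrightarrow> 0 < n_dir_subsets k d S"
  using not_both_vertical_imp_dir_subset[of S k d] finite_dir_subsets[of k d]
  by (auto simp: n_dir_subsets_def card_gt_0_iff)

lemma card_good_dir_subsets:
  "real (card {S \<in> dir_subsets (Suc k) (Suc d). \<not> both_vertical d S})
     = (2 + real (2 * d - k) / real (Suc k)) * real (card (dir_subsets k d))"
proof -
  let ?G = "{S \<in> dir_subsets (Suc k) (Suc d). \<not> both_vertical d S}"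
  have "real (card ?G) = (\<Sum>S\<in>?G. 1)"
    by simp
  also have "\<dots> = (\<Sum>S\<in>?G. (\<Sum>T \<in> {T \<in> dir_subsets k d. T \<subseteq> S}. 1) / n_dir_subsets k d S)"
  proof (intro sum.cong refl)
    fix S assume "S \<in> ?G"
    then show "1 = (\<Sum>T \<in> {T \<in> dir_subsets k d. T \<subseteq> S}. 1) / n_dir_subsets k d S"
      using n_dir_subsets_pos[of S k d] by (simp add: n_dir_subsets_def)
  qed
  also have "\<dots> = (2 + real (2 * d - k) / real (Suc k)) * real (card (dir_subsets k d))"
    unfolding sum_good_average_over_dir_subsets by simp
  finally show ?thesis .
qed

lemma sum_good_dir_subsets_ge:
  fixes \<phi> \<psi> :: "(nat \<times> bool) set \<Rightarrow> real"
  assumes "\<And>S T. S \<in> dir_subsets (Suc k) (Suc d) \<Longrightarrow> \<not> both_vertical d S \<Longrightarrow>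
      T \<in> dir_subsets k d \<Longrightarrow> T \<subseteq> S \<Longrightarrow> \<phi> T \<le> \<psi> S"
  shows "(2 + real (2 * d - k) / real (Suc k)) * sum \<phi> (dir_subsets k d)
       \<le> sum \<psi> {S \<in> dir_subsets (Suc k) (Suc d). \<not> both_vertical d S}"
  unfolding sum_good_average_over_dir_subsets[symmetric]
proof (rule sum_mono)
  fix S assume S: "S \<in> {S \<in> dir_subsets (Suc k) (Suc d). \<not> both_vertical d S}"
  have "(\<Sum>T \<in> {T \<in> dir_subsets k d. T \<subseteq> S}. \<phi> T) \<le> n_dir_subsets k d S * \<psi> S"
    using S assms sum_mono[of "{T \<in> dir_subsets k d. T \<subseteq> S}" \<phi> "\<lambda>_. \<psi> S"]
    by (simp add: n_dir_subsets_def)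
  then show "(\<Sum>T \<in> {T \<in> dir_subsets k d. T \<subseteq> S}. \<phi> T) / n_dir_subsets k d S \<le> \<psi> S"
    using S n_dir_subsets_pos[of S k d] by (simp add: divide_le_eq mult.commute)
qed

lemma average_dir_subsets_le:
  fixes \<phi> \<psi> :: "(nat \<times> bool) set \<Rightarrow> real"
  assumes k: "k \<le> 2 * d"
    and vertical: "\<And>S. S \<in> dir_subsets (Suc k) (Suc d) \<Longrightarrow> both_vertical d S \<Longrightarrow>
      sum \<phi> (dir_subsets k d) / card (dir_subsets k d) \<le> \<psi> S"
    and horizontal: "\<And>S T. S \<in> dir_subsets (Suc k) (Suc d) \<Longrightarrow> \<not> both_vertical d S \<Longrightarrow>
      T \<in> dir_subsets k d \<Longrightarrow> T \<subseteq> S \<Longrightarrow> \<phi> T \<le> \<psi> S"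
  shows "sum \<phi> (dir_subsets k d) / card (dir_subsets k d)
       \<le> sum \<psi> (dir_subsets (Suc k) (Suc d)) / card (dir_subsets (Suc k) (Suc d))"
proof -
  let ?C = "dir_subsets k d" and ?C' = "dir_subsets (Suc k) (Suc d)"
  let ?G = "{S \<in> ?C'. \<not> both_vertical d S}" and ?V = "{S \<in> ?C'. both_vertical d S}"
  define avg where "avg = sum \<phi> ?C / card ?C"
  have "card ?C > 0" "card ?C' > 0"
    using k dir_subsets_nonempty[of k d] dir_subsets_nonempty[of "Suc k" "Suc d"] finite_dir_subsets
    by (auto simp: card_gt_0_iff)
  then have good: "real (card ?G) * avg \<le> sum \<psi> ?G"
    using sum_good_dir_subsets_ge[OF horizontal] by (simp add: card_good_dir_subsets avg_def)
  have vert: "real (card ?V) * avg \<le> sum \<psi> ?V"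
    using vertical sum_mono[of ?V "\<lambda>_. avg" \<psi>] by (simp add: avg_def)
  have partition: "?G \<union> ?V = ?C'" "?G \<inter> ?V = {}"
    by auto
  have fin: "finite ?G" "finite ?V"
    using finite_dir_subsets[of "Suc k" "Suc d"] by simp_all
  have "sum \<psi> ?C' = sum \<psi> ?G + sum \<psi> ?V" "card ?C' = card ?G + card ?V"
    using sum.union_disjoint[OF fin partition(2), of \<psi>] card_Un_disjoint[OF fin partition(2)]
    unfolding partition(1) by simp_all
  then have "real (card ?C') * avg \<le> sum \<psi> ?C'"
    using good vert by (simp add: algebra_simps)
  then show ?thesis
    using \<open>card ?C' > 0\<close> by (simp add: avg_def le_divide_eq mult.commute)
qed

section \<open>Coupling the explorations in dimensions d and d + 1\<close>

text \<open>L y is the height of the lift of y. The last clause keeps the lift of an unexplored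
  vertex unexplored, so that it can still be revealed afresh.\<close>
definition coupled :: "nat \<Rightarrow> int list set \<Rightarrow> (int list \<Rightarrow> (nat \<times> bool) set)
    \<Rightarrow> int list set \<Rightarrow> (int list \<Rightarrow> (nat \<times> bool) set) \<Rightarrow> (int list \<Rightarrow> int) \<Rightarrow> bool" where
  "coupled d K \<sigma> K' \<sigma>' L \<longleftrightarrow>
     K \<subseteq> reachable d K \<sigma> \<and>
     (\<forall>y \<in> reachable d K \<sigma>. y @ [L y] \<in> reachable (Suc d) K' \<sigma>') \<and>
     (\<forall>y h. y @ [h] \<in> K' \<longrightarrow> y \<in> reachable d K \<sigma> \<and> (y \<notin> K \<longrightarrow> h < L y))"

lemma coupled_empty: "coupled d {} \<sigma> {} \<sigma>' (\<lambda>_. 0)"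
proof -
  have "reachable d {} \<sigma> = {origin d}"
    using reachable_subsetI[of d "{origin d}" "{}" \<sigma>] by auto
  then show ?thesis
    by (simp add: coupled_def origin_Suc[symmetric])
qed

lemma coupled_lift_reachable:
  "coupled d K \<sigma> K' \<sigma>' L \<Longrightarrow> y \<in> reachable d K \<sigma> \<Longrightarrow> y @ [L y] \<in> reachable (Suc d) K' \<sigma>'"
  by (simp add: coupled_def)

lemma coupled_explored_below_lift:
  "coupled d K \<sigma> K' \<sigma>' L \<Longrightarrow> y @ [h] \<in> K' \<Longrightarrow> y \<notin> K \<Longrightarrow> h < L y"
  unfolding coupled_def by blast

lemma coupled_lift_unexplored:
  "coupled d K \<sigma> K' \<sigma>' L \<Longrightarrow> y \<notin> K \<Longrightarrow> y @ [L y] \<notin> K'"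
  using coupled_explored_below_lift by blast

lemma coupled_vertical:
  assumes coupled: "coupled d K \<sigma> K' \<sigma>' L" and y: "y \<in> reachable d K \<sigma>" "y \<notin> K"
    and up: "(d, True) \<in> S"
  shows "coupled d K \<sigma> (insert (y @ [L y]) K') (\<sigma>'(y @ [L y] := S)) (L(y := L y + 1))"
proof -
  let ?K' = "insert (y @ [L y]) K'" and ?\<sigma>' = "\<sigma>'(y @ [L y] := S)"
  have mono: "reachable (Suc d) K' \<sigma>' \<subseteq> reachable (Suc d) ?K' ?\<sigma>'"
    using coupled_lift_unexplored[OF coupled y(2)] by (rule reachable_fun_upd_mono)
  have "y @ [L y] \<in> reachable (Suc d) ?K' ?\<sigma>'"
    using coupled_lift_reachable[OF coupled y(1)] mono by blast
  then have "step (y @ [L y]) (d, True) \<in> reachable (Suc d) ?K' ?\<sigma>'"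
    using up by (intro reachable_step) auto
  then have raised: "y @ [L y + 1] \<in> reachable (Suc d) ?K' ?\<sigma>'"
    using step_snoc_up[of y "L y"] length_reachable[OF y(1)] by simp
  show ?thesis
    unfolding coupled_def
  proof (intro conjI ballI allI impI)
    fix z assume "z \<in> reachable d K \<sigma>"
    then show "z @ [(L(y := L y + 1)) z] \<in> reachable (Suc d) ?K' ?\<sigma>'"
      using raised mono coupled_lift_reachable[OF coupled] by (cases "z = y") auto
  next
    fix z h assume "z @ [h] \<in> ?K'" "z \<notin> K"
    then show "h < (L(y := L y + 1)) z"
      using y(2) by (auto dest: coupled_explored_below_lift[OF coupled])
  qed (use coupled y in \<open>auto simp: coupled_def\<close>)
qed

lemma reachable_snoc_step:
  assumes "y @ [h] \<in> reachable (Suc d) K' \<sigma>'" "y @ [h] \<in> K'" "v \<in> \<sigma>' (y @ [h])"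
    and "v \<in> dirs d" "length y = d"
  shows "step y v @ [h] \<in> reachable (Suc d) K' \<sigma>'"
  using reachable_step[OF assms(1-3)] assms(4,5) by (cases v) (simp add: dirs_def step_snoc)

lemma coupled_horizontal:
  assumes coupled: "coupled d K \<sigma> K' \<sigma>' L" and y: "y \<in> reachable d K \<sigma>" "y \<notin> K"
    and T: "T \<subseteq> S" "T \<subseteq> dirs d"
  shows "coupled d (insert y K) (\<sigma>(y := T)) (insert (y @ [L y]) K') (\<sigma>'(y @ [L y] := S))
           (\<lambda>z. if z \<in> reachable d K \<sigma> then L z else L y)"
proof -
  let ?K' = "insert (y @ [L y]) K'" and ?\<sigma>' = "\<sigma>'(y @ [L y] := S)"
  let ?R = "reachable d K \<sigma>" and ?R\<^sub>y = "reachable d (insert y K) (\<sigma>(y := T))"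
  have mono': "reachable (Suc d) K' \<sigma>' \<subseteq> reachable (Suc d) ?K' ?\<sigma>'"
    using coupled_lift_unexplored[OF coupled y(2)] by (rule reachable_fun_upd_mono)
  have mono: "?R \<subseteq> ?R\<^sub>y"
    using y(2) by (rule reachable_fun_upd_mono)
  have new: "?R\<^sub>y \<subseteq> ?R \<union> step y ` T"
    using coupled by (intro reachable_insert_subset) (simp add: coupled_def)
  have lift: "y @ [L y] \<in> reachable (Suc d) ?K' ?\<sigma>'"
    using coupled_lift_reachable[OF coupled y(1)] mono' by blast
  show ?thesis
    unfolding coupled_def
  proof (intro conjI ballI allI impI)
    fix z assume "z \<in> ?R\<^sub>y"
    then consider "z \<in> ?R" | v where "z \<notin> ?R" "v \<in> T" "z = step y v"
      using new by blast
    then show "z @ [if z \<in> ?R then L z else L y] \<in> reachable (Suc d) ?K' ?\<sigma>'"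
    proof cases
      case 1
      then show ?thesis
        using coupled_lift_reachable[OF coupled] mono' by auto
    next
      case 2
      then have "step y v @ [L y] \<in> reachable (Suc d) ?K' ?\<sigma>'"
        using T length_reachable[OF y(1)] by (intro reachable_snoc_step[OF lift]) auto
      with 2 show ?thesis
        by simp
    qed
  qed (use coupled coupled_explored_below_lift[OF coupled] mono y in \<open>auto simp: coupled_def\<close>)
qed

section \<open>Comparison of the finite-volume probabilities\<close>

lemma cond_prob_reaches_dist_eq_1:
  assumes "z \<in> reachable d K \<sigma>" "int n \<le> l1_norm z"
  shows "cond_prob J q dflt (reaches_dist d n) K \<sigma> = 1"
proof (rule cond_prob_eq_1)
  fix \<omega>
  show "reaches_dist d n (override_on \<omega> \<sigma> K)"
    using assms reachable_override_on[of d K \<sigma> \<omega>] unfolding reaches_dist_def by blast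
qed

lemma cond_prob_reaches_dist_eq_0:
  assumes "reachable d K \<sigma> \<subseteq> K" "\<forall>z \<in> reachable d K \<sigma>. l1_norm z < int n"
  shows "cond_prob J q dflt (reaches_dist d n) K \<sigma> = 0"
  using assms by (intro cond_prob_eq_0) (auto simp: reaches_dist_def reachable_override_on_closed)

lemma cond_prob_le_by_revealing:
  fixes J :: "'i set" and f :: "('i \<Rightarrow> (nat \<times> bool) set) \<Rightarrow> bool"
    and J' :: "'j set" and f' :: "('j \<Rightarrow> (nat \<times> bool) set) \<Rightarrow> bool"
    and k d :: nat and dflt dflt' :: "(nat \<times> bool) set"
  defines "P \<equiv> cond_prob J (choice_pmf k d) dflt f"
    and "P' \<equiv> cond_prob J' (choice_pmf (Suc k) (Suc d)) dflt' f'"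
  assumes k: "k \<le> 2 * d"
    and y: "finite J" "y \<in> J" "y \<notin> K" and y': "finite J'" "y' \<in> J'" "y' \<notin> K'"
    and vertical: "\<And>S. S \<in> dir_subsets (Suc k) (Suc d) \<Longrightarrow> both_vertical d S \<Longrightarrow>
      P K \<sigma> \<le> P' (insert y' K') (\<sigma>'(y' := S))"
    and horizontal: "\<And>S T. S \<in> dir_subsets (Suc k) (Suc d) \<Longrightarrow> \<not> both_vertical d S \<Longrightarrow>
      T \<in> dir_subsets k d \<Longrightarrow> T \<subseteq> S \<Longrightarrow> P (insert y K) (\<sigma>(y := T)) \<le> P' (insert y' K') (\<sigma>'(y' := S))"
  shows "P K \<sigma> \<le> P' K' \<sigma>'"
proof -
  have lower: "P K \<sigma> = (\<Sum>T\<in>dir_subsets k d. P (insert y K) (\<sigma>(y := T))) / card (dir_subsets k d)"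
    unfolding P_def choice_pmf_eq_pmf_of_set using y k dir_subsets_nonempty finite_dir_subsets
    by (intro cond_prob_insert) auto
  have upper: "P' K' \<sigma>' = (\<Sum>S\<in>dir_subsets (Suc k) (Suc d). P' (insert y' K') (\<sigma>'(y' := S)))
      / card (dir_subsets (Suc k) (Suc d))"
    unfolding P'_def choice_pmf_eq_pmf_of_set using y' k dir_subsets_nonempty finite_dir_subsets
    by (intro cond_prob_insert) auto
  show ?thesis
    unfolding upper lower
  proof (rule average_dir_subsets_le[OF k])
    fix S assume "S \<in> dir_subsets (Suc k) (Suc d)" "both_vertical d S"
    from vertical[OF this] show "(\<Sum>T\<in>dir_subsets k d. P (insert y K) (\<sigma>(y := T))) / card (dir_subsets k d)
        \<le> P' (insert y' K') (\<sigma>'(y' := S))"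
      unfolding lower .
  qed (rule horizontal)
qed

lemma coupled_cases [consumes 1]:
  assumes coupled: "coupled d K \<sigma> K' \<sigma>' L"
  obtains (far) z where "z \<in> reachable (Suc d) K' \<sigma>'" "int n \<le> l1_norm z"
  | (stuck) "reachable d K \<sigma> \<subseteq> K" "\<forall>y \<in> reachable d K \<sigma>. l1_norm y < int n"
  | (fresh) y where "y \<in> reachable d K \<sigma>" "y \<notin> K" "y \<in> l1_ball d n" "y @ [L y] \<in> l1_ball (Suc d) n"
proof (cases "\<exists>z \<in> reachable (Suc d) K' \<sigma>'. int n \<le> l1_norm z")
  case True
  then show thesis
    using far by blast
next
  case near': False
  have near: "\<forall>y \<in> reachable d K \<sigma>. l1_norm y < int n"
  proof
    fix y assume "y \<in> reachable d K \<sigma>"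
    then have "y @ [L y] \<in> reachable (Suc d) K' \<sigma>'"
      by (rule coupled_lift_reachable[OF coupled])
    then show "l1_norm y < int n"
      using near' abs_ge_zero[of "L y"] by fastforce
  qed
  show thesis
  proof (cases "reachable d K \<sigma> \<subseteq> K")
    case True
    then show thesis
      using near by (rule stuck)
  next
    case False
    then obtain y where y: "y \<in> reachable d K \<sigma>" "y \<notin> K"
      by blast
    have y': "y @ [L y] \<in> reachable (Suc d) K' \<sigma>'"
      using coupled_lift_reachable[OF coupled y(1)] .
    show thesis
    proof (rule fresh[OF y])
      show "y \<in> l1_ball d n"
        using near y(1) length_reachable[OF y(1)] by (simp add: l1_ball_def)
      show "y @ [L y] \<in> l1_ball (Suc d) n"
        using near' y' length_reachable[OF y'] by (auto simp: l1_ball_def not_le)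
    qed
  qed
qed

lemma coupled_cond_prob_le:
  assumes k: "k \<le> 2 * d" and "coupled d K \<sigma> K' \<sigma>' L"
  shows "cond_prob (l1_ball d n) (choice_pmf k d) {} (reaches_dist d n) K \<sigma>
       \<le> cond_prob (l1_ball (Suc d) n) (choice_pmf (Suc k) (Suc d)) {} (reaches_dist (Suc d) n) K' \<sigma>'"
  using assms(2)
proof (induction "card (l1_ball (Suc d) n - K')" arbitrary: K \<sigma> K' \<sigma>' L rule: less_induct)
  case less
  let ?P = "cond_prob (l1_ball d n) (choice_pmf k d) {} (reaches_dist d n)"
  let ?P' = "cond_prob (l1_ball (Suc d) n) (choice_pmf (Suc k) (Suc d)) {} (reaches_dist (Suc d) n)"
  from less.prems show ?case
  proof (cases rule: coupled_cases[where n = n])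
    case (far z)
    then have "?P' K' \<sigma>' = 1"
      by (rule cond_prob_reaches_dist_eq_1)
    then show ?thesis
      using cond_prob_le_1 by simp
  next
    case stuck
    then have "?P K \<sigma> = 0"
      by (rule cond_prob_reaches_dist_eq_0)
    then show ?thesis
      using cond_prob_nonneg by simp
  next
    case (fresh y)
    let ?y' = "y @ [L y]"
    have y'K: "?y' \<notin> K'"
      using coupled_lift_unexplored[OF less.prems fresh(2)] .
    have "l1_ball (Suc d) n - insert ?y' K' \<subset> l1_ball (Suc d) n - K'"
      using fresh(4) y'K by blast
    then have smaller: "card (l1_ball (Suc d) n - insert ?y' K') < card (l1_ball (Suc d) n - K')"
      by (rule psubset_card_mono[OF finite_Diff[OF finite_l1_ball]])
    show ?thesis
    proof (rule cond_prob_le_by_revealing[OF k finite_l1_ball fresh(3,2) finite_l1_ball fresh(4) y'K])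
      fix S assume "S \<in> dir_subsets (Suc k) (Suc d)" "both_vertical d S"
      then have "coupled d K \<sigma> (insert ?y' K') (\<sigma>'(?y' := S)) (L(y := L y + 1))"
        using less.prems fresh by (intro coupled_vertical) (auto simp: both_vertical_def)
      then show "?P K \<sigma> \<le> ?P' (insert ?y' K') (\<sigma>'(?y' := S))"
        using less.hyps[OF smaller] by blast
    next
      fix S T assume "T \<subseteq> S" "T \<in> dir_subsets k d"
      then have "coupled d (insert y K) (\<sigma>(y := T)) (insert ?y' K') (\<sigma>'(?y' := S))
          (\<lambda>z. if z \<in> reachable d K \<sigma> then L z else L y)"
        using less.prems fresh by (intro coupled_horizontal) (auto simp: dir_subsets_def)
      then show "?P (insert y K) (\<sigma>(y := T)) \<le> ?P' (insert ?y' K') (\<sigma>'(?y' := S))"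
        using less.hyps[OF smaller] by blast
    qed
  qed
qed

lemma prob_reaches_dist_le:
  assumes "k \<le> 2 * d"
  shows "measure_pmf.prob (Pi_pmf (l1_ball d n) {} (\<lambda>_. choice_pmf k d)) {\<omega>. reaches_dist d n \<omega>}
       \<le> measure_pmf.prob (Pi_pmf (l1_ball (Suc d) n) {} (\<lambda>_. choice_pmf (Suc k) (Suc d)))
           {\<omega>. reaches_dist (Suc d) n \<omega>}"
  using coupled_cond_prob_le[OF assms coupled_empty] by (simp add: cond_prob_empty)

theorem theorem2p6:
  fixes k d :: nat
  assumes "1 \<le> k" and "1 \<le> d" and "k \<le> 2 * d"
  shows "thetaD (k + 1) (d + 1) \<ge> thetaD k d"
proof -
  have "measure (DnG k d) {\<omega> \<in> space (DnG k d). reaches_dist d n \<omega>}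
      \<le> measure (DnG (Suc k) (Suc d)) {\<omega> \<in> space (DnG (Suc k) (Suc d)). reaches_dist (Suc d) n \<omega>}" for n
    using prob_reaches_dist_le[OF assms(3)] by (simp add: measure_DnG_reaches_dist)
  then have "thetaD k d \<le> thetaD (Suc k) (Suc d)"
    by (intro LIMSEQ_le[OF reaches_dist_tendsto_thetaD reaches_dist_tendsto_thetaD]) auto
  then show ?thesis
    by simp
qed

end
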